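(* Let $R>1$ and fix $(t_0,x_0)$ with $t_0\ge0$, $t_0+|x_0|\le R$; write $r_0=|x_0|$, $v_0=R-t_0-r_0$. For $0\le\tilde r\le t_0$ let $t=t_0-\tilde r$ and for $\tilde\omega\in\mathbb{S}^2$ let $r=|x_0+\tilde r\tilde\omega|$. Then for every $\gamma'<1$, \[ \int_{\mathbb{S}^2}(R-t-r)^{-\gamma'}\,d\tilde\omega\le C(R-t)^{\gamma'}(R-t_0)^{-\gamma'}(v_0+\tilde r)^{-\gamma'} \] for some constant $C$ depending only on $\gamma'$ and $R$. *)

theory Defs
  imports "HOL-Analysis.Analysis"
begin

definition S2pt :: "real \<Rightarrow> real \<Rightarrow> real^3" where
  "S2pt th ph = vector [sin th * cos ph, sin th * sin ph, cos th]"

text \<open>Integral of a nonnegative function over S^2 w.r.t. the standard surface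
  measure d omega = sin th dth dph, as an extended nonnegative real.\<close>
definition sphere_nn_integral :: "(real^3 \<Rightarrow> real) \<Rightarrow> ennreal" where
  "sphere_nn_integral f =
     (\<integral>\<^sup>+ th. \<integral>\<^sup>+ ph. ennreal (f (S2pt th ph) * sin th)
          * indicator {0..pi} th * indicator {0..2*pi} ph \<partial>lborel \<partial>lborel)"

end

theory Submission
  imports Defs
begin

text \<open>
  Write a = R - t, u = R - t0, v = v0 + r and r' = |x0 + r w|, where r is the radius r-tilde,
  and put A = u^2 - |x0|^2 + 2ru, p = 2r x0. Then (a - r')(a + r') = A - p.w, |p| <= A and
  uv <= A <= 2uv. For gamma <= 0 this gives the pointwise bound a (a - r') <= 2A <= 4uv.
  For 0 < gamma < 1 it gives a - r' >= (A - p.w)/(2a), and A - p.w >= (A/2) max(1 - e.w, 1 - |p|/A)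
  for the unit vector e along p. So the claim reduces to a bound, uniform in e, on the integral
  of (1 - e.w)^(-gamma) = (|w - e|^2/2)^(-gamma) over the sphere. It comes from a dyadic
  decomposition into caps around e: a cap of radius d has area O(d^2), and the resulting
  geometric series converges because gamma < 1.

  Rather than rotating e to the pole, which would need the rotation invariance of the surface
  measure defined through fixed spherical coordinates, cap areas are estimated directly in
  these coordinates: a cap lies in a latitude band of height O(rho d + d^2), rho the distance
  of its centre from the polar axis, and, if 2d < rho, in an azimuth window of width O(d/rho).
\<close>

section \<open>Integration over the sphere\<close>

lemma S2pt_nth [simp]:
  "S2pt th ph $ 1 = sin th * cos ph" "S2pt th ph $ 2 = sin th * sin ph" "S2pt th ph $ 3 = cos th"
  by (simp_all add: S2pt_def)

lemma power2_norm_vec3: "(norm (x :: real^3))\<^sup>2 = (x$1)\<^sup>2 + (x$2)\<^sup>2 + (x$3)\<^sup>2"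
  by (simp only: power2_norm_eq_inner) (simp add: inner_vec_def sum_3 power2_eq_square)

lemma norm_S2pt [simp]: "norm (S2pt th ph) = 1"
proof -
  have "(norm (S2pt th ph))\<^sup>2 = (sin th)\<^sup>2 * ((cos ph)\<^sup>2 + (sin ph)\<^sup>2) + (cos th)\<^sup>2"
    unfolding power2_norm_vec3 S2pt_nth power_mult_distrib by algebra
  then show ?thesis using norm_ge_zero[of "S2pt th ph"] by (auto simp: power2_eq_1_iff)
qed

lemma borel_measurable_S2pt [measurable]:
  assumes [measurable]: "f \<in> borel_measurable M" "g \<in> borel_measurable M"
  shows "(\<lambda>x. S2pt (f x) (g x)) \<in> borel_measurable M"
proof (subst borel_measurable_euclidean_space, intro ballI)
  fix i :: "real^3" assume "i \<in> Basis"
  then obtain j where "i = axis j 1" by (auto simp: Basis_vec_def)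
  moreover have "j = 1 \<or> j = 2 \<or> j = 3" using exhaust_3 by blast
  ultimately show "(\<lambda>x. S2pt (f x) (g x) \<bullet> i) \<in> borel_measurable M"
    by (auto simp: inner_axis)
qed

lemma sphere_nn_integral_mono:
  assumes "\<And>w. norm w = 1 \<Longrightarrow> f w \<le> g w"
  shows "sphere_nn_integral f \<le> sphere_nn_integral g"
  unfolding sphere_nn_integral_def
proof (intro nn_integral_mono)
  fix th ph :: real
  have "ennreal (f (S2pt th ph) * sin th) \<le> ennreal (g (S2pt th ph) * sin th)" if "th \<in> {0..pi}"
    using that assms[OF norm_S2pt] by (intro ennreal_leI mult_right_mono sin_ge_zero) auto
  then show "ennreal (f (S2pt th ph) * sin th) * indicator {0..pi} th * indicator {0..2*pi} ph
     \<le> ennreal (g (S2pt th ph) * sin th) * indicator {0..pi} th * indicator {0..2*pi} ph"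
    by (cases "th \<in> {0..pi}") (auto intro: mult_right_mono)
qed

lemma sphere_nn_integral_const:
  assumes "0 \<le> c"
  shows "sphere_nn_integral (\<lambda>_. c) = ennreal (4 * pi * c)"
proof -
  have polar: "(\<integral>\<^sup>+th. ennreal (c * sin th) * indicator {0..pi} th \<partial>lborel) = ennreal (2 * c)"
  proof -
    have "(\<integral>\<^sup>+th. ennreal (c * sin th) * indicator {0..pi} th \<partial>lborel)
        = ennreal (- c * cos pi - - c * cos 0)"
      using assms
      by (intro nn_integral_FTC_Icc) (auto intro!: derivative_eq_intros mult_nonneg_nonneg sin_ge_zero)
    then show ?thesis by simp
  qed
  have "sphere_nn_integral (\<lambda>_. c)
      = (\<integral>\<^sup>+th. ennreal (c * sin th) * indicator {0..pi} th * emeasure lborel {0..2*pi} \<partial>lborel)"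
    unfolding sphere_nn_integral_def by (subst nn_integral_cmult_indicator) auto
  also have "\<dots> = (\<integral>\<^sup>+th. ennreal (c * sin th) * indicator {0..pi} th \<partial>lborel) * emeasure lborel {0..2*pi}"
    by (rule nn_integral_multc) measurable
  also have "\<dots> = ennreal (2 * c) * ennreal (2 * pi)"
    unfolding polar by simp
  also have "\<dots> = ennreal (4 * pi * c)" using assms by (simp flip: ennreal_mult add: mult_ac)
  finally show ?thesis .
qed

lemma sphere_nn_integral_cmult:
  assumes "0 \<le> c" and [measurable]: "f \<in> borel_measurable borel"
  shows "sphere_nn_integral (\<lambda>w. c * f w) = ennreal c * sphere_nn_integral f"
proof -
  have "ennreal (c * f (S2pt th ph) * sin th) * indicator {0..pi} th * indicator {0..2*pi} ph
      = ennreal c * (ennreal (f (S2pt th ph) * sin th) * indicator {0..pi} th * indicator {0..2*pi} ph)"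
    for th ph
    using assms(1) by (simp add: ennreal_mult' mult_ac)
  then show ?thesis
    unfolding sphere_nn_integral_def by (simp add: nn_integral_cmult)
qed

lemma sphere_nn_integral_le_suminf:
  assumes [measurable]: "\<And>k. g k \<in> borel_measurable borel" and "\<And>k. 0 \<le> c k"
    and "\<And>w. norm w = 1 \<Longrightarrow> ennreal (f w) \<le> (\<Sum>k. ennreal (c k * g k w))"
  shows "sphere_nn_integral f \<le> (\<Sum>k. ennreal (c k) * sphere_nn_integral (g k))"
proof -
  define h where "h k th ph = ennreal (c k * g k (S2pt th ph) * sin th) * indicator {0..pi} th
    * indicator {0..2*pi} ph" for k th ph
  have pointwise: "ennreal (f (S2pt th ph) * sin th) * indicator {0..pi} th * indicator {0..2*pi} ph
      \<le> (\<Sum>k. h k th ph)" for th ph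
  proof (cases "th \<in> {0..pi}")
    case True
    then have sin: "0 \<le> sin th" by (simp add: sin_ge_zero)
    have "ennreal (f (S2pt th ph) * sin th) \<le> (\<Sum>k. ennreal (c k * g k (S2pt th ph))) * ennreal (sin th)"
      using assms(3)[OF norm_S2pt] sin by (simp add: ennreal_mult'' mult_right_mono)
    also have "\<dots> = (\<Sum>k. ennreal (c k * g k (S2pt th ph) * sin th))"
      using sin by (simp add: ennreal_suminf_multc ennreal_mult'')
    finally show ?thesis
      unfolding h_def ennreal_suminf_multc by (intro mult_right_mono) auto
  qed (simp add: h_def)
  have "sphere_nn_integral f \<le> (\<integral>\<^sup>+th. \<integral>\<^sup>+ph. (\<Sum>k. h k th ph) \<partial>lborel \<partial>lborel)"
    unfolding sphere_nn_integral_def by (intro nn_integral_mono pointwise)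
  also have "\<dots> = (\<integral>\<^sup>+th. (\<Sum>k. \<integral>\<^sup>+ph. h k th ph \<partial>lborel) \<partial>lborel)"
    by (intro nn_integral_cong nn_integral_suminf) (unfold h_def, measurable)
  also have "\<dots> = (\<Sum>k. \<integral>\<^sup>+th. \<integral>\<^sup>+ph. h k th ph \<partial>lborel \<partial>lborel)"
    by (rule nn_integral_suminf) (unfold h_def, measurable)
  also have "\<dots> = (\<Sum>k. sphere_nn_integral (\<lambda>w. c k * g k w))"
    unfolding h_def sphere_nn_integral_def ..
  also have "\<dots> = (\<Sum>k. ennreal (c k) * sphere_nn_integral (g k))"
    using assms(2) by (simp add: sphere_nn_integral_cmult)
  finally show ?thesis .
qed

section \<open>Area of spherical caps\<close>

lemma nn_integral_sin_cos_band_le: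
  assumes "0 \<le> h"
  shows "(\<integral>\<^sup>+th. ennreal (sin th) * indicator {th \<in> {0..pi}. \<bar>cos th - c\<bar> \<le> h} th \<partial>lborel)
    \<le> ennreal (2 * h)"
proof -
  define clamp :: "real \<Rightarrow> real" where "clamp x = max (-1) (min 1 x)" for x
  define a where "a = arccos (clamp (c + h))"
  define b where "b = arccos (clamp (c - h))"
  have clamp: "-1 \<le> clamp x" "clamp x \<le> 1" for x by (auto simp: clamp_def)
  have band: "{th \<in> {0..pi}. \<bar>cos th - c\<bar> \<le> h} \<subseteq> {a..b}"
  proof
    fix th assume th: "th \<in> {th \<in> {0..pi}. \<bar>cos th - c\<bar> \<le> h}"
    then have "clamp (c - h) \<le> cos th" "cos th \<le> clamp (c + h)"
      by (auto simp: clamp_def abs_le_iff le_max_iff_disj max.bounded_iff min_le_iff_disj)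
    then have "a \<le> arccos (cos th)" "arccos (cos th) \<le> b"
      unfolding a_def b_def using clamp by (auto intro!: arccos_le_arccos)
    then show "th \<in> {a..b}" using th arccos_cos by auto
  qed
  have "a \<le> b"
    unfolding a_def b_def using clamp assms by (intro arccos_le_arccos) (auto simp: clamp_def)
  have "0 \<le> a" "b \<le> pi"
    using clamp by (auto simp: a_def b_def arccos_lbound arccos_ubound)
  have "(\<integral>\<^sup>+th. ennreal (sin th) * indicator {th \<in> {0..pi}. \<bar>cos th - c\<bar> \<le> h} th \<partial>lborel)
      \<le> (\<integral>\<^sup>+th. ennreal (sin th) * indicator {a..b} th \<partial>lborel)"
    using band by (intro nn_integral_mono) (auto split: split_indicator)
  also have "\<dots> = ennreal (- cos b - - cos a)"
    using \<open>a \<le> b\<close> \<open>0 \<le> a\<close> \<open>b \<le> pi\<close>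
    by (intro nn_integral_FTC_Icc) (auto intro!: derivative_eq_intros sin_ge_zero)
  also have "- cos b - - cos a = clamp (c + h) - clamp (c - h)"
    unfolding a_def b_def using clamp by simp
  also have "\<dots> \<le> 2 * h"
    unfolding clamp_def using assms by auto
  finally show ?thesis by (simp add: ennreal_leI)
qed

lemma sphere_nn_integral_indicator_le_band:
  assumes "J \<in> sets borel" "0 \<le> h"
    and "\<And>th ph. th \<in> {0..pi} \<Longrightarrow> ph \<in> {0..2*pi} \<Longrightarrow> S2pt th ph \<in> A \<Longrightarrow> \<bar>cos th - c\<bar> \<le> h \<and> ph \<in> J"
  shows "sphere_nn_integral (indicator A) \<le> ennreal (2 * h) * emeasure lborel J"
proof -
  define I where "I = {th \<in> {0..pi}. \<bar>cos th - c\<bar> \<le> h}"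
  have [measurable]: "I \<in> sets borel" unfolding I_def by measurable
  have "ennreal (indicator A (S2pt th ph) * sin th) * indicator {0..pi} th * indicator {0..2*pi} ph
      \<le> ennreal (sin th) * indicator I th * indicator J ph" for th ph
  proof (cases "th \<in> {0..pi} \<and> ph \<in> {0..2*pi} \<and> S2pt th ph \<in> A")
    case True
    then show ?thesis using assms(3)[of th ph] by (simp add: I_def)
  qed (auto split: split_indicator)
  then have "sphere_nn_integral (indicator A)
      \<le> (\<integral>\<^sup>+th. \<integral>\<^sup>+ph. ennreal (sin th) * indicator I th * indicator J ph \<partial>lborel \<partial>lborel)"
    unfolding sphere_nn_integral_def by (intro nn_integral_mono)
  also have "\<dots> = (\<integral>\<^sup>+th. ennreal (sin th) * indicator I th * emeasure lborel J \<partial>lborel)"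
    using assms(1) by (subst nn_integral_cmult_indicator) auto
  also have "\<dots> = (\<integral>\<^sup>+th. ennreal (sin th) * indicator I th \<partial>lborel) * emeasure lborel J"
    by (rule nn_integral_multc) measurable
  also have "\<dots> \<le> ennreal (2 * h) * emeasure lborel J"
    unfolding I_def by (intro mult_right_mono nn_integral_sin_cos_band_le assms(2)) simp
  finally show ?thesis .
qed

lemma abs_le_two_abs_sin:
  fixes y :: real
  assumes "\<bar>y\<bar> \<le> pi" "0 < cos y"
  shows "\<bar>y\<bar> \<le> 2 * \<bar>sin y\<bar>"
proof -
  define z where "z = \<bar>y\<bar>"
  have "z < pi / 2"
  proof (rule ccontr)
    assume "\<not> z < pi / 2"
    then have "cos z \<le> cos (pi / 2)"
      using assms unfolding z_def by (intro cos_monotone_0_pi_le) auto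
    moreover have "cos z = cos y" unfolding z_def by (simp add: abs_if)
    ultimately show False using assms by simp
  qed
  then have "z \<le> 8 / 5" using pi_approx(2) by simp
  then have "z\<^sup>2 \<le> 3" using mult_mono[of z "8/5" z "8/5"] by (simp add: z_def power2_eq_square)
  have taylor: "\<bar>sin z - (\<Sum>m<3. sin_coeff m * z ^ m)\<bar> \<le> inverse (fact 3) * \<bar>z\<bar> ^ 3"
    by (rule Maclaurin_sin_bound)
  have sum3: "(\<Sum>m<3. sin_coeff m * z ^ m) = z"
    by (simp add: sin_coeff_def eval_nat_numeral)
  have "\<bar>sin z - z\<bar> \<le> z ^ 3 / 6"
    using taylor unfolding sum3 by (simp add: z_def eval_nat_numeral)
  then have "z - z ^ 3 / 6 \<le> sin z" by linarith
  moreover have "z ^ 3 \<le> 3 * z"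
    using mult_left_mono[OF \<open>z\<^sup>2 \<le> 3\<close>, of z] by (simp add: z_def power2_eq_square power3_eq_cube)
  moreover have "sin z \<le> \<bar>sin y\<bar>" by (simp add: z_def abs_if)
  ultimately show ?thesis unfolding z_def by linarith
qed

definition azimuth_window :: "real \<Rightarrow> real \<Rightarrow> real set" where
  "azimuth_window be \<delta> = (\<Union>k\<in>{-1,0,1::int}. {be + 2*pi*k - \<delta> .. be + 2*pi*k + \<delta>})"

lemma azimuth_near_mod_2pi:
  fixes S d \<rho> ph be :: real
  assumes "0 \<le> S" "0 \<le> d" "2 * d < \<rho>"
    and close: "(S * cos ph - \<rho> * cos be)\<^sup>2 + (S * sin ph - \<rho> * sin be)\<^sup>2 \<le> d\<^sup>2"
    and "ph \<in> {0..2*pi}" "be \<in> {0..2*pi}"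
  shows "ph \<in> azimuth_window be (2 * d / \<rho>)"
proof -
  define x where "x = ph - be"
  have law_of_cosines: "(S * cos ph - \<rho> * cos be)\<^sup>2 + (S * sin ph - \<rho> * sin be)\<^sup>2
      = (\<rho> * sin x)\<^sup>2 + (S - \<rho> * cos x)\<^sup>2"
    unfolding x_def sin_diff cos_diff
    using sin_cos_squared_add[of ph] sin_cos_squared_add[of be] by algebra
  have "0 < \<rho>" using assms by linarith
  have "(\<rho> * sin x)\<^sup>2 \<le> d\<^sup>2"
    using close law_of_cosines zero_le_power2[of "S - \<rho> * cos x"] by linarith
  then have "\<rho> * \<bar>sin x\<bar> \<le> d"
    using \<open>0 < \<rho>\<close> \<open>0 \<le> d\<close> by (simp add: abs_le_square_iff[symmetric] abs_mult)
  then have sin_small: "2 * \<bar>sin x\<bar> \<le> 2 * d / \<rho>"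
    using \<open>0 < \<rho>\<close> by (simp add: field_simps)
  have "0 < cos x"
  proof (rule ccontr)
    assume "\<not> 0 < cos x"
    then have "\<rho> * cos x \<le> 0" using \<open>0 < \<rho>\<close> by (simp add: mult_nonneg_nonpos)
    then have "\<bar>\<rho> * cos x\<bar> \<le> \<bar>S - \<rho> * cos x\<bar>" using \<open>0 \<le> S\<close> by linarith
    then have "(\<rho> * cos x)\<^sup>2 \<le> (S - \<rho> * cos x)\<^sup>2" by (simp only: abs_le_square_iff)
    moreover have "\<rho>\<^sup>2 = (\<rho> * sin x)\<^sup>2 + (\<rho> * cos x)\<^sup>2"
      by (simp add: power_mult_distrib flip: distrib_left)
    ultimately have "\<rho>\<^sup>2 \<le> d\<^sup>2" using close law_of_cosines by linarith
    moreover have "d\<^sup>2 < \<rho>\<^sup>2" using assms by (intro power_strict_mono) auto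
    ultimately show False by simp
  qed
  have "-2*pi \<le> x" "x \<le> 2*pi" using assms unfolding x_def by auto
  consider "\<bar>x\<bar> \<le> pi" | "pi < x" | "x < -pi" by linarith
  then have "\<exists>k\<in>{-1,0,1::int}. \<bar>x - 2*pi*k\<bar> \<le> pi"
  proof cases
    case 1
    then show ?thesis by (intro bexI[of _ 0]) auto
  next
    case 2
    then show ?thesis using \<open>x \<le> 2*pi\<close> by (intro bexI[of _ 1]) auto
  next
    case 3
    then show ?thesis using \<open>-2*pi \<le> x\<close> by (intro bexI[of _ "-1"]) auto
  qed
  then obtain k :: int where k: "k \<in> {-1,0,1}" "\<bar>x - 2*pi*k\<bar> \<le> pi" by blast
  have "sin (x - 2*pi*k) = sin x" "cos (x - 2*pi*k) = cos x"
    by (simp_all add: sin_diff cos_diff)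
  then have "\<bar>x - 2*pi*k\<bar> \<le> 2*d/\<rho>"
    using abs_le_two_abs_sin[of "x - 2*pi*k"] k(2) \<open>0 < cos x\<close> sin_small by simp
  then show ?thesis
    using k(1) unfolding x_def azimuth_window_def by (auto simp: abs_le_iff intro!: bexI[of _ k])
qed

lemma emeasure_azimuth_window_le:
  assumes "0 \<le> \<delta>"
  shows "emeasure lborel (azimuth_window be \<delta>) \<le> ennreal (6 * \<delta>)"
proof -
  have "emeasure lborel (\<Union>k\<in>{-1,0,1::int}. {be + 2*pi*k - \<delta> .. be + 2*pi*k + \<delta>})
      \<le> (\<Sum>k\<in>{-1,0,1::int}. emeasure lborel {be + 2*pi*k - \<delta> .. be + 2*pi*k + \<delta>})"
    by (rule emeasure_subadditive_finite) auto
  also have "\<dots> = 3 * ennreal (2 * \<delta>)"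
    using assms by (simp flip: ennreal_plus)
  also have "\<dots> = ennreal (6 * \<delta>)"
    using assms by (simp add: numeral_mult_ennreal)
  finally show ?thesis unfolding azimuth_window_def .
qed

definition axis_dist :: "real^3 \<Rightarrow> real" where
  "axis_dist x = sqrt ((x$1)\<^sup>2 + (x$2)\<^sup>2)"

lemma axis_dist_nonneg: "0 \<le> axis_dist x"
  by (simp add: axis_dist_def)

lemma axis_dist_le_norm: "axis_dist x \<le> norm x"
proof -
  have "axis_dist x \<le> sqrt ((norm x)\<^sup>2)"
    unfolding axis_dist_def power2_norm_vec3 by (intro real_sqrt_le_mono) simp
  then show ?thesis by simp
qed

lemma axis_dist_diff_le: "\<bar>axis_dist a - axis_dist b\<bar> \<le> norm (a - b)"
proof -
  have "axis_dist (x + y) \<le> axis_dist x + axis_dist y" for x y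
    unfolding axis_dist_def by (simp add: real_sqrt_sum_squares_triangle_ineq)
  from this[of b "a - b"] this[of a "b - a"] show ?thesis
    using axis_dist_le_norm[of "a - b"] axis_dist_le_norm[of "b - a"]
    by (simp add: norm_minus_commute)
qed

lemma height_diff_le:
  fixes a b :: "real^3"
  assumes "norm a = 1" "norm b = 1"
  shows "\<bar>a$3 - b$3\<bar> \<le> 4 * axis_dist b * norm (a - b) + 2 * (norm (a - b))\<^sup>2"
proof -
  define D where "D = norm (a - b)"
  have "\<bar>a$3 - b$3\<bar> \<le> D" using component_le_norm_cart[of "a - b" 3] by (simp add: D_def)
  have "axis_dist a \<le> axis_dist b + D" using axis_dist_diff_le[of a b] by (simp add: D_def)
  have unit: "(x$3)\<^sup>2 + (axis_dist x)\<^sup>2 = 1" if "norm x = 1" for x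
    using that power2_norm_vec3[of x] by (simp add: axis_dist_def)
  \<comment> \<open>Near a pole, where \<open>a$3 + b$3\<close> is not small, this bounds the height difference by
    \<open>O(axis_dist b * D + D\<^sup>2)\<close> rather than \<open>D\<close>.\<close>
  have "(a$3 - b$3) * (a$3 + b$3) = (axis_dist b - axis_dist a) * (axis_dist b + axis_dist a)"
    using unit[OF assms(1)] unit[OF assms(2)] by algebra
  then have "\<bar>a$3 - b$3\<bar> * \<bar>a$3 + b$3\<bar> = \<bar>(axis_dist b - axis_dist a) * (axis_dist b + axis_dist a)\<bar>"
    by (metis abs_mult)
  also have "\<dots> = \<bar>axis_dist a - axis_dist b\<bar> * (axis_dist b + axis_dist a)"
    using axis_dist_nonneg[of a] axis_dist_nonneg[of b] by (simp add: abs_mult abs_minus_commute)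
  also have "\<dots> \<le> D * (2 * axis_dist b + D)"
    using axis_dist_diff_le[of a b] \<open>axis_dist a \<le> axis_dist b + D\<close> axis_dist_nonneg[of a]
      axis_dist_nonneg[of b]
    by (intro mult_mono) (auto simp: D_def)
  finally have product: "\<bar>a$3 - b$3\<bar> * \<bar>a$3 + b$3\<bar> \<le> D * (2 * axis_dist b + D)" .
  have nonneg: "0 \<le> axis_dist b * D" "0 \<le> D\<^sup>2" using axis_dist_nonneg[of b] by (simp_all add: D_def)
  consider "1/2 \<le> axis_dist b" | "1/2 \<le> \<bar>a$3 + b$3\<bar>" | "axis_dist b < 1/2" "\<bar>a$3 + b$3\<bar> < 1/2"
    by linarith
  then have "\<bar>a$3 - b$3\<bar> \<le> 4 * axis_dist b * D + 2 * D\<^sup>2"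
  proof cases
    case 1
    then have "D \<le> 2 * axis_dist b * D" using mult_right_mono[of 1 "2 * axis_dist b" D] by (simp add: D_def)
    then show ?thesis using \<open>\<bar>a$3 - b$3\<bar> \<le> D\<close> nonneg by linarith
  next
    case 2
    then have "\<bar>a$3 - b$3\<bar> \<le> 2 * (\<bar>a$3 - b$3\<bar> * \<bar>a$3 + b$3\<bar>)"
      using mult_left_mono[of "1/2" "\<bar>a$3 + b$3\<bar>" "\<bar>a$3 - b$3\<bar>"] by simp
    then show ?thesis using product by (simp add: power2_eq_square algebra_simps)
  next
    case 3
    then have "(axis_dist b)\<^sup>2 < (1/2)\<^sup>2" using axis_dist_nonneg[of b] by (intro power_strict_mono) auto
    then have "(1/2)\<^sup>2 < (b$3)\<^sup>2" using unit[OF assms(2)] by (simp add: power_divide)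
    then have "1/2 < \<bar>b$3\<bar>" by (simp add: abs_le_square_iff[symmetric] less_le_not_le)
    then have "1/2 < D" using 3 \<open>\<bar>a$3 - b$3\<bar> \<le> D\<close> by linarith
    then have "D \<le> 2 * D\<^sup>2" by (simp add: power2_eq_square)
    then show ?thesis using \<open>\<bar>a$3 - b$3\<bar> \<le> D\<close> nonneg by linarith
  qed
  then show ?thesis by (simp add: D_def)
qed

lemma obtain_azimuth:
  fixes x :: "real^3"
  obtains be where "x$1 = axis_dist x * cos be" "x$2 = axis_dist x * sin be" "be \<in> {0..2*pi}"
proof (cases "axis_dist x = 0")
  case True
  then have "x$1 = 0" "x$2 = 0" by (simp_all add: axis_dist_def sum_power2_eq_zero_iff)
  then show ?thesis using that[of 0] True by simp
next
  case False
  then have "0 < axis_dist x" using axis_dist_nonneg[of x] by linarith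
  have "(x$1 / axis_dist x)\<^sup>2 + (x$2 / axis_dist x)\<^sup>2 = ((x$1)\<^sup>2 + (x$2)\<^sup>2) / (axis_dist x)\<^sup>2"
    by (simp add: power_divide add_divide_distrib)
  also have "(x$1)\<^sup>2 + (x$2)\<^sup>2 = (axis_dist x)\<^sup>2" by (simp add: axis_dist_def)
  also have "(axis_dist x)\<^sup>2 / (axis_dist x)\<^sup>2 = 1" using \<open>0 < axis_dist x\<close> by simp
  finally have "(x$1 / axis_dist x)\<^sup>2 + (x$2 / axis_dist x)\<^sup>2 = 1" .
  then obtain be where "0 \<le> be" "be \<le> 2*pi" "x$1 / axis_dist x = cos be" "x$2 / axis_dist x = sin be"
    using sincos_total_2pi_le by blast
  then show ?thesis using that[of be] \<open>0 < axis_dist x\<close> by (simp add: field_simps)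
qed

lemma sphere_cap_latitude_le:
  fixes e :: "real^3"
  assumes "norm e = 1" "S2pt th ph \<in> cball e d"
  shows "\<bar>cos th - e$3\<bar> \<le> 4 * axis_dist e * d + 2 * d\<^sup>2"
proof -
  have "norm (S2pt th ph - e) \<le> d" using assms(2) by (simp add: dist_norm norm_minus_commute)
  then have "4 * axis_dist e * norm (S2pt th ph - e) + 2 * (norm (S2pt th ph - e))\<^sup>2
      \<le> 4 * axis_dist e * d + 2 * d\<^sup>2"
    by (intro add_mono mult_left_mono power_mono) (auto simp: axis_dist_nonneg)
  then show ?thesis using height_diff_le[of "S2pt th ph" e] assms(1) by simp
qed

lemma sphere_cap_azimuth_mem:
  fixes e :: "real^3"
  assumes be: "e$1 = axis_dist e * cos be" "e$2 = axis_dist e * sin be" "be \<in> {0..2*pi}"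
    and "0 \<le> d" "2 * d < axis_dist e"
    and "th \<in> {0..pi}" "ph \<in> {0..2*pi}" "S2pt th ph \<in> cball e d"
  shows "ph \<in> azimuth_window be (2 * d / axis_dist e)"
proof (rule azimuth_near_mod_2pi)
  have "(sin th * cos ph - axis_dist e * cos be)\<^sup>2 + (sin th * sin ph - axis_dist e * sin be)\<^sup>2
      \<le> (norm (S2pt th ph - e))\<^sup>2"
    unfolding power2_norm_vec3 using be by simp
  also have "\<dots> \<le> d\<^sup>2"
    using assms(8) by (intro power_mono) (auto simp: dist_norm norm_minus_commute)
  finally show "(sin th * cos ph - axis_dist e * cos be)\<^sup>2 + (sin th * sin ph - axis_dist e * sin be)\<^sup>2
      \<le> d\<^sup>2" .
qed (use assms in \<open>auto intro: sin_ge_zero\<close>)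

lemma sphere_cap_area_le:
  fixes e :: "real^3"
  assumes "norm e = 1" "0 < d"
  shows "sphere_nn_integral (indicator (cball e d)) \<le> ennreal (160 * d\<^sup>2)"
proof -
  define \<rho> where "\<rho> = axis_dist e"
  define h where "h = 4 * \<rho> * d + 2 * d\<^sup>2"
  obtain be where be: "e$1 = \<rho> * cos be" "e$2 = \<rho> * sin be" "be \<in> {0..2*pi}"
    unfolding \<rho>_def by (rule obtain_azimuth)
  have "0 \<le> \<rho>" "0 \<le> h" using assms by (simp_all add: \<rho>_def h_def axis_dist_nonneg)
  have latitude: "\<bar>cos th - e$3\<bar> \<le> h" if "S2pt th ph \<in> cball e d" for th ph
    using sphere_cap_latitude_le[OF assms(1) that] by (simp add: h_def \<rho>_def)
  show ?thesis
  proof (cases "2 * d < \<rho>")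
    case True
    have "sphere_nn_integral (indicator (cball e d))
        \<le> ennreal (2 * h) * emeasure lborel (azimuth_window be (2 * d / \<rho>))"
      using latitude sphere_cap_azimuth_mem[of e be d] be True assms(2) \<open>0 \<le> h\<close>
      by (intro sphere_nn_integral_indicator_le_band) (auto simp: \<rho>_def azimuth_window_def)
    also have "\<dots> \<le> ennreal (2 * h) * ennreal (6 * (2 * d / \<rho>))"
      using True assms(2) by (intro mult_left_mono emeasure_azimuth_window_le) auto
    also have "\<dots> = ennreal (2 * h * (6 * (2 * d / \<rho>)))"
      using True \<open>0 \<le> h\<close> assms(2) by (subst ennreal_mult[symmetric]) auto
    also have "\<dots> \<le> ennreal (160 * d\<^sup>2)"
    proof (intro ennreal_leI)
      have "2 * h * (6 * (2 * d / \<rho>)) = 96 * d\<^sup>2 + 48 * d\<^sup>2 * (d / \<rho>)"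
        using True assms(2) by (simp add: h_def field_simps power2_eq_square)
      moreover have "d / \<rho> \<le> 1 / 2" using True assms(2) by (simp add: field_simps)
      then have "48 * d\<^sup>2 * (d / \<rho>) \<le> 48 * d\<^sup>2 * (1 / 2)" by (intro mult_left_mono) auto
      ultimately show "2 * h * (6 * (2 * d / \<rho>)) \<le> 160 * d\<^sup>2"
        using zero_le_power2[of d] by linarith
    qed
    finally show ?thesis .
  next
    case False
    have "sphere_nn_integral (indicator (cball e d)) \<le> ennreal (2 * h) * emeasure lborel {0..2*pi}"
      using latitude \<open>0 \<le> h\<close> by (intro sphere_nn_integral_indicator_le_band) auto
    also have "\<dots> = ennreal (2 * h * (2 * pi))"
      using \<open>0 \<le> h\<close> by (simp add: ennreal_mult[symmetric])
    also have "\<dots> \<le> ennreal (160 * d\<^sup>2)"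
    proof (intro ennreal_leI)
      have "\<rho> * d \<le> 2 * d * d" using False assms(2) by (intro mult_right_mono) auto
      then have "h \<le> 10 * d\<^sup>2" unfolding h_def by (simp add: power2_eq_square)
      then have "2 * h * (2 * pi) \<le> 2 * (10 * d\<^sup>2) * (2 * 4)"
        using pi_less_4 \<open>0 \<le> h\<close> by (intro mult_mono) auto
      then show "2 * h * (2 * pi) \<le> 160 * d\<^sup>2" by simp
    qed
    finally show ?thesis .
  qed
qed

section \<open>Inverse powers of the distance to a point of the sphere\<close>

lemma power2_two_power: "((2::real) ^ k)\<^sup>2 = 4 ^ k"
  by (induction k) (simp_all add: power_mult_distrib)

lemma exists_dyadic_scale:
  fixes W D s :: real
  assumes "0 < W" "0 \<le> s" "0 \<le> D" "D \<le> 2" "D\<^sup>2 \<le> 2 * W"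
  shows "\<exists>k. D \<le> 2 / 2 ^ k \<and> W powr -s \<le> (4 powr s) ^ (k + 1)"
proof -
  define P where "P n \<longleftrightarrow> 2 / 4 ^ (n + 1) < W" for n :: nat
  have powr_le: "W powr -s \<le> (4 powr s) ^ (n + 1)" if "P n" for n
  proof -
    have "1 / 4 ^ (n + 1) \<le> 2 / (4::real) ^ (n + 1)" by (intro divide_right_mono) auto
    then have "1 / 4 ^ (n + 1) < W" using that unfolding P_def by linarith
    then have "W powr -s \<le> (1 / 4 ^ (n + 1)) powr -s" using assms by (intro powr_mono2') auto
    also have "\<dots> = (4 ^ (n + 1)) powr s" by (simp add: powr_minus_divide powr_divide)
    also have "(4::real) ^ (n + 1) = 4 powr real (n + 1)" by (rule powr_realpow[symmetric]) simp
    also have "(4 powr real (n + 1)) powr s = (4 powr s) ^ (n + 1)"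
      by (simp only: powr_powr powr_power mult.commute)
    finally show ?thesis .
  qed
  obtain n where "(1/4) ^ n < W / 2" using real_arch_pow_inv[of "W / 2" "1/4"] assms(1) by auto
  then have "P n" unfolding P_def by (simp add: power_divide field_simps)
  show ?thesis
  proof (cases "P 0")
    case True
    then show ?thesis using powr_le[of 0] assms(4) by (intro exI[of _ 0]) auto
  next
    case False
    then obtain m where "\<not> P m" "P (Suc m)" using exists_least_lemma \<open>P n\<close> by blast
    have "D\<^sup>2 \<le> 4 / 4 ^ Suc m"
      using \<open>\<not> P m\<close> assms(5) unfolding P_def by simp
    also have "\<dots> = (2 / 2 ^ Suc m)\<^sup>2" by (simp add: power_divide power2_two_power)
    finally have "D \<le> 2 / 2 ^ Suc m" by (rule power2_le_imp_le) simp
    then show ?thesis using powr_le[OF \<open>P (Suc m)\<close>] by blast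
  qed
qed

lemma norm_diff_unit_sq:
  fixes w e :: "'a::real_inner"
  assumes "norm w = 1" "norm e = 1"
  shows "(norm (w - e))\<^sup>2 = 2 * (1 - e \<bullet> w)"
  using assms by (simp add: power2_norm_eq_inner inner_diff_left inner_diff_right inner_commute norm_eq_1)

lemma max_powr_le_dyadic_sum:
  fixes e w :: "real^3"
  assumes "norm e = 1" "norm w = 1" "0 \<le> \<tau>" "0 < s"
  shows "ennreal ((max (1 - e \<bullet> w) \<tau>) powr -s)
    \<le> (\<Sum>k. ennreal ((4 powr s) ^ (k + 1) * indicator (cball e (2 / 2 ^ k)) w))"
proof (cases "max (1 - e \<bullet> w) \<tau> = 0")
  case False
  define W where "W = max (1 - e \<bullet> w) \<tau>"
  define D where "D = norm (w - e)"
  define q where "q = 4 powr s"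
  have "D\<^sup>2 = 2 * (1 - e \<bullet> w)" unfolding D_def using assms(2,1) by (rule norm_diff_unit_sq)
  moreover have "1 - e \<bullet> w \<le> W" by (simp add: W_def)
  ultimately have "D\<^sup>2 \<le> 2 * W" "0 < W"
    using False zero_le_power2[of D] by (auto simp: W_def[symmetric] less_le)
  moreover have "D \<le> 2" using norm_triangle_ineq4[of w e] assms(1,2) by (simp add: D_def)
  moreover have "0 \<le> D" by (simp add: D_def)
  ultimately obtain k where k: "D \<le> 2 / 2 ^ k" "W powr -s \<le> q ^ (k + 1)"
    using exists_dyadic_scale[of W s D] assms(4) unfolding q_def by auto
  then have "ennreal (W powr -s) \<le> ennreal (q ^ (k + 1) * indicator (cball e (2 / 2 ^ k)) w)"
    by (simp add: D_def dist_norm norm_minus_commute ennreal_leI)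
  also have "\<dots> \<le> (\<Sum>k. ennreal (q ^ (k + 1) * indicator (cball e (2 / 2 ^ k)) w))"
    using sum_le_suminf[of "\<lambda>k. ennreal (q ^ (k + 1) * indicator (cball e (2 / 2 ^ k)) w)" "{k}"]
    by simp
  finally show ?thesis by (simp only: W_def q_def)
qed simp

lemma sphere_nn_integral_max_powr_le:
  fixes e :: "real^3"
  assumes "norm e = 1" "0 \<le> \<tau>" "0 < s" "s < 1"
  shows "sphere_nn_integral (\<lambda>w. (max (1 - e \<bullet> w) \<tau>) powr -s)
    \<le> ennreal (2560 * 4 powr s / (4 - 4 powr s))"
proof -
  define q where "q = 4 powr s"
  have "0 < q" "q < 4"
    using assms powr_less_mono[of s 1 4] by (simp_all add: q_def)
  have "ennreal ((max (1 - e \<bullet> w) \<tau>) powr -s)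
      \<le> (\<Sum>k. ennreal (q ^ (k + 1) * indicator (cball e (2 / 2 ^ k)) w))" if "norm w = 1" for w
    unfolding q_def by (rule max_powr_le_dyadic_sum[OF assms(1) that assms(2,3)])
  then have "sphere_nn_integral (\<lambda>w. (max (1 - e \<bullet> w) \<tau>) powr -s)
      \<le> (\<Sum>k. ennreal (q ^ (k + 1)) * sphere_nn_integral (indicator (cball e (2 / 2 ^ k))))"
    using \<open>0 < q\<close> by (intro sphere_nn_integral_le_suminf) (auto intro: borel_measurable_indicator)
  also have "\<dots> \<le> (\<Sum>k. ennreal (q ^ (k + 1)) * ennreal (160 * (2 / 2 ^ k)\<^sup>2))"
    by (intro suminf_le mult_left_mono sphere_cap_area_le assms(1)) auto
  also have "\<dots> = (\<Sum>k. ennreal (640 * q * (q / 4) ^ k))"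
  proof (intro suminf_cong)
    fix k :: nat
    have "q ^ (k + 1) * (160 * (2 / 2 ^ k)\<^sup>2) = 640 * q * (q / 4) ^ k"
      using power2_two_power[of k] by (simp add: power_divide)
    then show "ennreal (q ^ (k + 1)) * ennreal (160 * (2 / 2 ^ k)\<^sup>2) = ennreal (640 * q * (q / 4) ^ k)"
      using \<open>0 < q\<close> by (simp flip: ennreal_mult)
  qed
  also have "\<dots> = ennreal (\<Sum>k. 640 * q * (q / 4) ^ k)"
    using \<open>0 < q\<close> \<open>q < 4\<close> by (intro suminf_ennreal2 summable_mult summable_geometric) auto
  also have "(\<Sum>k. 640 * q * (q / 4) ^ k) = 640 * q * (1 / (1 - q / 4))"
    using \<open>0 < q\<close> \<open>q < 4\<close>
    by (subst suminf_mult) (auto intro: summable_geometric simp: suminf_geometric)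
  also have "\<dots> = 2560 * 4 powr s / (4 - 4 powr s)"
    using \<open>q < 4\<close> by (simp add: q_def field_simps)
  finally show ?thesis .
qed

lemma half_max_le_one_minus_mult:
  fixes x \<theta> :: real
  assumes "\<bar>x\<bar> \<le> 1" "0 \<le> \<theta>" "\<theta> \<le> 1"
  shows "max (1 - x) (1 - \<theta>) / 2 \<le> 1 - \<theta> * x"
proof -
  have "\<theta> * x \<le> \<theta> * 1" using assms by (intro mult_left_mono) auto
  moreover have "\<theta> * x \<le> max 0 x"
  proof (cases "0 \<le> x")
    case True
    then show ?thesis using mult_right_mono[OF assms(3) True] by simp
  next
    case False
    then show ?thesis using mult_nonneg_nonpos[OF assms(2), of x] by simp
  qed
  ultimately show ?thesis using assms(1) by (auto simp: max_def abs_le_iff split: if_splits)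
qed

lemma sphere_nn_integral_affine_powr_le:
  fixes p :: "real^3"
  assumes "norm p \<le> A" "0 < s" "s < 1"
  shows "sphere_nn_integral (\<lambda>w. (A - p \<bullet> w) powr -s)
    \<le> ennreal (2560 * 4 powr s / (4 - 4 powr s) * (A / 2) powr -s)"
proof -
  obtain e :: "real^3" where e: "norm e = 1" "p = norm p *\<^sub>R e"
  proof (cases "p = 0")
    case True
    then show ?thesis using that[of "axis 1 1"] by simp
  next
    case False
    then show ?thesis using that[of "sgn p"] by (simp add: norm_sgn sgn_div_norm)
  qed
  \<comment> \<open>The majorant must not vanish where the integrand does not, since \<open>0 powr -s = 0\<close>;
    hence the truncation of \<open>1 - e \<bullet> w\<close> at \<open>1 - \<theta>\<close>.\<close>
  define \<theta> where "\<theta> = norm p / A"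
  have "0 \<le> A" using assms(1) norm_ge_zero[of p] by linarith
  then have "0 \<le> \<theta>" "\<theta> \<le> 1" using assms(1) by (auto simp: \<theta>_def divide_le_eq_1)
  have pointwise: "(A - p \<bullet> w) powr -s \<le> (A / 2) powr -s * (max (1 - e \<bullet> w) (1 - \<theta>)) powr -s"
    if "norm w = 1" for w
  proof (cases "A - p \<bullet> w = 0")
    case False
    define x where "x = e \<bullet> w"
    have "\<bar>x\<bar> \<le> 1" using Cauchy_Schwarz_ineq2[of e w] e(1) that by (simp add: x_def)
    have "0 < A"
    proof (rule ccontr)
      assume "\<not> 0 < A"
      then have "p = 0" using assms(1) \<open>0 \<le> A\<close> by auto
      then show False using False \<open>\<not> 0 < A\<close> assms(1) by simp
    qed
    have gap: "A - p \<bullet> w = A * (1 - \<theta> * x)"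
      using \<open>0 < A\<close> by (subst e(2)) (simp add: \<theta>_def x_def algebra_simps)
    have "A * (max (1 - x) (1 - \<theta>) / 2) \<le> A * (1 - \<theta> * x)"
      using \<open>0 < A\<close> half_max_le_one_minus_mult[OF \<open>\<bar>x\<bar> \<le> 1\<close> \<open>0 \<le> \<theta>\<close> \<open>\<theta> \<le> 1\<close>]
      by (intro mult_left_mono) auto
    then have lower: "A / 2 * max (1 - x) (1 - \<theta>) \<le> A - p \<bullet> w" by (simp add: gap)
    have "0 < max (1 - x) (1 - \<theta>)"
    proof (rule ccontr)
      assume "\<not> 0 < max (1 - x) (1 - \<theta>)"
      then have "x = 1" "\<theta> = 1" using \<open>\<theta> \<le> 1\<close> \<open>\<bar>x\<bar> \<le> 1\<close> by auto
      then show False using False gap by simp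
    qed
    then have "(A - p \<bullet> w) powr -s \<le> (A / 2 * max (1 - x) (1 - \<theta>)) powr -s"
      using lower \<open>0 < A\<close> assms(2) by (intro powr_mono2') auto
    also have "\<dots> = (A / 2) powr -s * (max (1 - x) (1 - \<theta>)) powr -s"
      by (rule powr_mult)
    finally show ?thesis by (simp add: x_def)
  qed simp
  have "sphere_nn_integral (\<lambda>w. (A - p \<bullet> w) powr -s)
      \<le> sphere_nn_integral (\<lambda>w. (A / 2) powr -s * (max (1 - e \<bullet> w) (1 - \<theta>)) powr -s)"
    by (rule sphere_nn_integral_mono) (rule pointwise)
  also have "\<dots> = ennreal ((A / 2) powr -s) * sphere_nn_integral (\<lambda>w. (max (1 - e \<bullet> w) (1 - \<theta>)) powr -s)"
    by (rule sphere_nn_integral_cmult) simp_all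
  also have "\<dots> \<le> ennreal ((A / 2) powr -s) * ennreal (2560 * 4 powr s / (4 - 4 powr s))"
    using e(1) \<open>\<theta> \<le> 1\<close> assms(2,3) by (intro mult_left_mono sphere_nn_integral_max_powr_le) auto
  also have "\<dots> = ennreal (2560 * 4 powr s / (4 - 4 powr s) * (A / 2) powr -s)"
    by (subst ennreal_mult'') (simp_all add: mult.commute)
  finally show ?thesis .
qed

section \<open>The gap to the light cone\<close>

lemma norm_add_scaleR_unit_sq:
  fixes x w :: "'a::real_inner"
  assumes "norm w = 1"
  shows "(norm (x + t *\<^sub>R w))\<^sup>2 = (norm x)\<^sup>2 + 2 * t * (x \<bullet> w) + t\<^sup>2"
proof -
  have "w \<bullet> w = 1" using assms by (simp add: norm_eq_1)
  then show ?thesis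
    by (simp only: power2_norm_eq_inner)
       (simp add: inner_add_left inner_add_right inner_commute power2_eq_square algebra_simps)
qed

lemma cone_gap_factorization:
  fixes x0 w :: "'a::real_inner"
  assumes "norm w = 1"
  shows "(u + t - norm (x0 + t *\<^sub>R w)) * (u + t + norm (x0 + t *\<^sub>R w))
    = (u\<^sup>2 - (norm x0)\<^sup>2 + 2 * t * u) - ((2 * t) *\<^sub>R x0) \<bullet> w"
proof -
  have "(u + t - norm (x0 + t *\<^sub>R w)) * (u + t + norm (x0 + t *\<^sub>R w))
      = (u + t)\<^sup>2 - (norm (x0 + t *\<^sub>R w))\<^sup>2"
    by (simp add: power2_eq_square algebra_simps)
  then show ?thesis
    unfolding norm_add_scaleR_unit_sq[OF assms] by (simp add: power2_eq_square algebra_simps)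
qed

lemma cone_gap_quadratic_bounds:
  fixes r0 u t :: real
  assumes "0 \<le> r0" "r0 \<le> u" "0 \<le> t"
  shows "2 * t * r0 \<le> u\<^sup>2 - r0\<^sup>2 + 2 * t * u"
    and "u * (u - r0 + t) \<le> u\<^sup>2 - r0\<^sup>2 + 2 * t * u"
    and "u\<^sup>2 - r0\<^sup>2 + 2 * t * u \<le> 2 * (u * (u - r0 + t))"
proof -
  have "0 \<le> (u - r0) * (u + r0)" "0 \<le> t * (u - r0)" "0 \<le> r0 * (u - r0)" "0 \<le> t * u"
    using assms by simp_all
  moreover have "0 \<le> (u - r0)\<^sup>2" by simp
  ultimately show "2 * t * r0 \<le> u\<^sup>2 - r0\<^sup>2 + 2 * t * u"
    and "u * (u - r0 + t) \<le> u\<^sup>2 - r0\<^sup>2 + 2 * t * u"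
    and "u\<^sup>2 - r0\<^sup>2 + 2 * t * u \<le> 2 * (u * (u - r0 + t))"
    by (simp_all add: power2_eq_square algebra_simps)
qed

lemma cone_gap_nonneg:
  fixes x0 w :: "'a::real_normed_vector"
  assumes "norm x0 \<le> u" "0 \<le> t" "norm w = 1"
  shows "0 \<le> u + t - norm (x0 + t *\<^sub>R w)"
  using norm_triangle_ineq[of x0 "t *\<^sub>R w"] assms by simp

lemma cone_gap_pos_imp_pos:
  fixes x0 w :: "'a::real_normed_vector"
  assumes "norm x0 \<le> u" "0 \<le> t" "norm w = 1" "0 < u + t - norm (x0 + t *\<^sub>R w)"
  shows "0 < u" "0 < u - norm x0 + t"
proof -
  show "0 < u"
  proof (rule ccontr)
    assume "\<not> 0 < u"
    then have "norm x0 \<le> 0" using assms(1) by linarith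
    then have "x0 = 0" by simp
    then show False using assms \<open>\<not> 0 < u\<close> by simp
  qed
  show "0 < u - norm x0 + t"
  proof (rule ccontr)
    assume "\<not> 0 < u - norm x0 + t"
    then have "t = 0" "u = norm x0" using assms(1,2) by linarith+
    then show False using assms(4) by simp
  qed
qed

lemma cone_gap_powr_le_nonpos:
  fixes x0 w :: "'a::real_inner"
  assumes "\<gamma> \<le> 0" "norm x0 \<le> u" "0 \<le> t" "norm w = 1"
  shows "(u + t - norm (x0 + t *\<^sub>R w)) powr -\<gamma>
    \<le> 4 powr -\<gamma> * (u + t) powr \<gamma> * u powr -\<gamma> * (u - norm x0 + t) powr -\<gamma>"
proof (cases "0 < u + t - norm (x0 + t *\<^sub>R w)")
  case True
  define a where "a = u + t"
  define v where "v = u - norm x0 + t"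
  define X where "X = u + t - norm (x0 + t *\<^sub>R w)"
  define r where "r = norm (x0 + t *\<^sub>R w)"
  have "0 < u" "0 < v" using cone_gap_pos_imp_pos[OF assms(2,3,4) True] by (simp_all add: v_def)
  have "0 < X" "0 < a" using True \<open>0 < u\<close> assms(3) by (simp_all add: X_def a_def)
  have "a * X \<le> (a + r) * X" using \<open>0 < X\<close> by (simp add: r_def)
  also have "\<dots> = (u\<^sup>2 - (norm x0)\<^sup>2 + 2 * t * u) - ((2 * t) *\<^sub>R x0) \<bullet> w"
    using cone_gap_factorization[OF assms(4), of u t x0] by (simp add: a_def X_def r_def mult.commute)
  also have "\<dots> \<le> (u\<^sup>2 - (norm x0)\<^sup>2 + 2 * t * u) + 2 * t * norm x0"
    using Cauchy_Schwarz_ineq2[of "(2 * t) *\<^sub>R x0" w] assms(3,4) by (simp add: abs_le_iff)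
  also have "\<dots> \<le> 4 * (u * v)"
    using cone_gap_quadratic_bounds[of "norm x0" u t] assms(2,3) by (simp add: v_def)
  finally have "a * X \<le> 4 * (u * v)" .
  have "a powr -\<gamma> * a powr \<gamma> = 1" using \<open>0 < a\<close> by (simp flip: powr_add)
  then have "X powr -\<gamma> = (a * X) powr -\<gamma> * a powr \<gamma>"
    using \<open>0 < a\<close> \<open>0 < X\<close> by (simp add: powr_mult mult_ac)
  also have "\<dots> \<le> (4 * (u * v)) powr -\<gamma> * a powr \<gamma>"
    using \<open>a * X \<le> 4 * (u * v)\<close> \<open>0 < a\<close> \<open>0 < X\<close> assms(1)
    by (intro mult_right_mono powr_mono2) auto
  also have "\<dots> = 4 powr -\<gamma> * a powr \<gamma> * u powr -\<gamma> * v powr -\<gamma>"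
    using \<open>0 < u\<close> \<open>0 < v\<close> by (simp add: powr_mult mult_ac)
  finally show ?thesis by (simp add: X_def a_def v_def)
next
  case False
  then have "u + t - norm (x0 + t *\<^sub>R w) = 0" using cone_gap_nonneg[OF assms(2,3,4)] by linarith
  then show ?thesis by simp
qed

lemma cone_gap_powr_le_pos:
  fixes x0 w :: "'a::real_inner"
  assumes "0 < \<gamma>" "norm x0 \<le> u" "0 \<le> t" "norm w = 1"
  shows "(u + t - norm (x0 + t *\<^sub>R w)) powr -\<gamma>
    \<le> (2 * (u + t)) powr \<gamma> * ((u\<^sup>2 - (norm x0)\<^sup>2 + 2 * t * u) - ((2 * t) *\<^sub>R x0) \<bullet> w) powr -\<gamma>"
proof (cases "0 < u + t - norm (x0 + t *\<^sub>R w)")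
  case True
  define a where "a = u + t"
  define X where "X = u + t - norm (x0 + t *\<^sub>R w)"
  define Y where "Y = (u\<^sup>2 - (norm x0)\<^sup>2 + 2 * t * u) - ((2 * t) *\<^sub>R x0) \<bullet> w"
  have "0 < a" using cone_gap_pos_imp_pos[OF assms(2,3,4) True] assms(3) by (simp add: a_def)
  have Y: "Y = X * (a + norm (x0 + t *\<^sub>R w))"
    using cone_gap_factorization[OF assms(4), of u t x0] by (simp add: a_def X_def Y_def)
  also have "\<dots> \<le> X * (2 * a)"
    using True by (intro mult_left_mono) (auto simp: X_def a_def)
  finally have "Y / (2 * a) \<le> X" using \<open>0 < a\<close> by (simp add: pos_divide_le_eq)
  moreover have "0 < Y / (2 * a)"
    unfolding Y using True \<open>0 < a\<close>
    by (intro divide_pos_pos mult_pos_pos add_pos_nonneg) (auto simp: X_def)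
  ultimately have "X powr -\<gamma> \<le> (Y / (2 * a)) powr -\<gamma>"
    using assms(1) by (intro powr_mono2') auto
  also have "\<dots> = (2 * a) powr \<gamma> * Y powr -\<gamma>"
    by (simp add: powr_divide powr_minus_divide)
  finally show ?thesis by (simp add: X_def Y_def a_def)
next
  case False
  then have "u + t - norm (x0 + t *\<^sub>R w) = 0" using cone_gap_nonneg[OF assms(2,3,4)] by linarith
  then show ?thesis by simp
qed

lemma sphere_nn_integral_cone_gap_le_nonpos:
  fixes x0 :: "real^3"
  assumes "\<gamma> \<le> 0" "norm x0 \<le> u" "0 \<le> t" and a_eq: "a = u + t"
  shows "sphere_nn_integral (\<lambda>w. (a - norm (x0 + t *\<^sub>R w)) powr -\<gamma>)
    \<le> ennreal (4 * pi * 4 powr -\<gamma> * a powr \<gamma> * u powr -\<gamma> * (u - norm x0 + t) powr -\<gamma>)"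
proof -
  define Q where "Q = 4 powr -\<gamma> * a powr \<gamma> * u powr -\<gamma> * (u - norm x0 + t) powr -\<gamma>"
  have "sphere_nn_integral (\<lambda>w. (a - norm (x0 + t *\<^sub>R w)) powr -\<gamma>) \<le> sphere_nn_integral (\<lambda>_. Q)"
    using cone_gap_powr_le_nonpos[OF assms(1-3)] unfolding Q_def a_eq by (rule sphere_nn_integral_mono)
  also have "\<dots> = ennreal (4 * pi * Q)" by (rule sphere_nn_integral_const) (simp add: Q_def)
  finally show ?thesis by (simp add: Q_def mult_ac)
qed

lemma sphere_nn_integral_cone_gap_le_pos:
  fixes x0 :: "real^3"
  assumes "0 < \<gamma>" "\<gamma> < 1" "norm x0 \<le> u" "0 \<le> t" and a_eq: "a = u + t"
  shows "sphere_nn_integral (\<lambda>w. (a - norm (x0 + t *\<^sub>R w)) powr -\<gamma>)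
    \<le> ennreal (4 powr \<gamma> * (2560 * 4 powr \<gamma> / (4 - 4 powr \<gamma>))
               * a powr \<gamma> * u powr -\<gamma> * (u - norm x0 + t) powr -\<gamma>)"
proof (cases "0 < u \<and> 0 < u - norm x0 + t")
  case False
  have "a - norm (x0 + t *\<^sub>R w) = 0" if "norm w = 1" for w :: "real^3"
    using False cone_gap_pos_imp_pos[OF assms(3,4) that] cone_gap_nonneg[OF assms(3,4) that]
    by (force simp: a_eq)
  then have "sphere_nn_integral (\<lambda>w. (a - norm (x0 + t *\<^sub>R w)) powr -\<gamma>) \<le> sphere_nn_integral (\<lambda>_. 0)"
    by (intro sphere_nn_integral_mono) simp
  also have "\<dots> = 0" using sphere_nn_integral_const[of 0] by simp
  finally show ?thesis by simp
next
  case True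
  define v where "v = u - norm x0 + t"
  define A where "A = u\<^sup>2 - (norm x0)\<^sup>2 + 2 * t * u"
  define p where "p = (2 * t) *\<^sub>R x0"
  define K where "K = 2560 * 4 powr \<gamma> / (4 - 4 powr \<gamma>)"
  have "0 < u" "0 < v" using True by (simp_all add: v_def)
  have "norm p \<le> A" "u * v \<le> A"
    using cone_gap_quadratic_bounds[of "norm x0" u t] assms(3,4) by (simp_all add: p_def A_def v_def)
  have "sphere_nn_integral (\<lambda>w. (a - norm (x0 + t *\<^sub>R w)) powr -\<gamma>)
      \<le> sphere_nn_integral (\<lambda>w. (2 * a) powr \<gamma> * (A - p \<bullet> w) powr -\<gamma>)"
    using cone_gap_powr_le_pos[OF assms(1,3,4)] unfolding a_eq A_def p_def
    by (rule sphere_nn_integral_mono)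
  also have "\<dots> = ennreal ((2 * a) powr \<gamma>) * sphere_nn_integral (\<lambda>w. (A - p \<bullet> w) powr -\<gamma>)"
    by (rule sphere_nn_integral_cmult) simp_all
  also have "\<dots> \<le> ennreal ((2 * a) powr \<gamma>) * ennreal (K * (A / 2) powr -\<gamma>)"
    unfolding K_def using \<open>norm p \<le> A\<close> assms(1,2)
    by (intro mult_left_mono sphere_nn_integral_affine_powr_le) auto
  also have "\<dots> \<le> ennreal ((2 * a) powr \<gamma>) * ennreal (K * (u * v / 2) powr -\<gamma>)"
  proof -
    have "(A / 2) powr -\<gamma> \<le> (u * v / 2) powr -\<gamma>"
      using \<open>u * v \<le> A\<close> \<open>0 < u\<close> \<open>0 < v\<close> assms(1) by (intro powr_mono2') auto
    moreover have "0 \<le> K" using powr_less_mono[of \<gamma> 1 4] assms(2) by (simp add: K_def)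
    ultimately have "K * (A / 2) powr -\<gamma> \<le> K * (u * v / 2) powr -\<gamma>" by (rule mult_left_mono)
    then show ?thesis by (rule mult_left_mono[OF ennreal_leI]) simp
  qed
  also have "\<dots> = ennreal ((2 * a) powr \<gamma> * (K * (u * v / 2) powr -\<gamma>))"
    by (rule ennreal_mult'[symmetric]) simp
  also have "(2 * a) powr \<gamma> * (K * (u * v / 2) powr -\<gamma>)
      = 4 powr \<gamma> * K * a powr \<gamma> * u powr -\<gamma> * v powr -\<gamma>"
  proof -
    have "(2 * a) powr \<gamma> = 2 powr \<gamma> * a powr \<gamma>" by (simp add: powr_mult)
    moreover have "(u * v / 2) powr -\<gamma> = 2 powr \<gamma> * (u powr -\<gamma> * v powr -\<gamma>)"
      using \<open>0 < u\<close> \<open>0 < v\<close> by (simp add: powr_divide powr_mult powr_minus_divide)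
    moreover have "(4::real) powr \<gamma> = 2 powr \<gamma> * 2 powr \<gamma>" using powr_mult[of 2 2 \<gamma>] by simp
    ultimately show ?thesis by (simp add: mult_ac)
  qed
  finally show ?thesis by (simp add: K_def v_def)
qed

theorem lemma5p1:
  fixes R \<gamma> :: real
  assumes "R > 1" and "\<gamma> < 1"
  shows "\<exists>C::real. \<forall>(t0::real) (x0::real^3) (rt::real).
           t0 \<ge> 0 \<and> t0 + norm x0 \<le> R \<and> 0 \<le> rt \<and> rt \<le> t0 \<longrightarrow>
           sphere_nn_integral
             (\<lambda>\<omega>. (R - (t0 - rt) - norm (x0 + rt *\<^sub>R \<omega>)) powr (- \<gamma>))
           \<le> ennreal (C * (R - (t0 - rt)) powr \<gamma> * (R - t0) powr (- \<gamma>)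
                       * ((R - t0 - norm x0) + rt) powr (- \<gamma>))"
proof (cases "\<gamma> \<le> 0")
  \<comment> \<open>The constant depends on \<open>\<gamma>\<close> only.\<close>
  case True
  then show ?thesis
    by (intro exI[of _ "4 * pi * 4 powr -\<gamma>"] allI impI sphere_nn_integral_cone_gap_le_nonpos) auto
next
  case False
  then show ?thesis
    using assms(2)
    by (intro exI[of _ "4 powr \<gamma> * (2560 * 4 powr \<gamma> / (4 - 4 powr \<gamma>))"] allI impI
        sphere_nn_integral_cone_gap_le_pos) auto
qed

end
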